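(* Let $R,S,T$ be multirelations $X\leftrightarrow\mathcal{P}Y$. Then (1) if $R\subseteq S$ then $R\cap T\sqsubseteq_\downarrow S\cap T$ and $S\cap T\sqsubseteq_\uparrow R\cap T$; (2) $R\Cap S\sqsubseteq_\downarrow R\sqsubseteq_\downarrow R\Cup R$, $R\Cap R\sqsubseteq_\uparrow R\sqsubseteq_\uparrow R\Cup S$ and $R\Cap R\sqsubseteq_\updownarrow R\sqsubseteq_\updownarrow R\Cup R$; (3) $R\Cap S\sqsubseteq_\downarrow R\Cup S$, $R\Cap S\sqsubseteq_\uparrow R\Cup S$ and $R\Cap S\sqsubseteq_\updownarrow R\Cup S$; (4) with respect to the preorder $\sqsubseteq_\downarrow$, $R\Cap S$ is a greatest lower bound and $R\cup S$ a least upper bound of $R$ and $S$ (unique up to $=_\downarrow$); (5) with respect to the preorder $\sqsubseteq_\uparrow$, $R\Cup S$ is a least upper bound and $R\cup S$ a greatest lower bound of $R$ and $S$ (unique up to $=_\uparrow$).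
   Context: $R\Cup S=\{(a,A\cup B)\mid (a,A)\in R,(a,B)\in S\}$, $R\Cap S=\{(a,A\cap B)\mid (a,A)\in R,(a,B)\in S\}$. $R^{\uparrow}=\{(a,A)\mid\exists B.(a,B)\in R\wedge B\subseteq A\}$, $R^{\downarrow}=\{(a,A)\mid\exists B.(a,B)\in R\wedge A\subseteq B\}$. $R\sqsubseteq_\uparrow S\iff S\subseteq R^{\uparrow}$; $R\sqsubseteq_\downarrow S\iff R\subseteq S^{\downarrow}$; $R\sqsubseteq_\updownarrow S\iff R\sqsubseteq_\downarrow S\wedge R\sqsubseteq_\uparrow S$. $R=_\downarrow S\iff R^{\downarrow}=S^{\downarrow}$, $R=_\uparrow S\iff R^{\uparrow}=S^{\uparrow}$. A greatest lower bound of $R,S$ w.r.t. a preorder $\sqsubseteq$ is an element $L$ with $L\sqsubseteq R$, $L\sqsubseteq S$ and $T\sqsubseteq L$ for every $T$ with $T\sqsubseteq R$ and $T\sqsubseteq S$; least upper bound dually. *)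

theory Defs
  imports Main
begin

text \<open>Multirelations X <-> P Y are modelled as sets of pairs ('a \<times> 'b set).\<close>

definition mcup :: "('a \<times> 'b set) set \<Rightarrow> ('a \<times> 'b set) set \<Rightarrow> ('a \<times> 'b set) set" where
  "mcup R S = {(a, A \<union> B) | a A B. (a, A) \<in> R \<and> (a, B) \<in> S}"

definition mcap :: "('a \<times> 'b set) set \<Rightarrow> ('a \<times> 'b set) set \<Rightarrow> ('a \<times> 'b set) set" where
  "mcap R S = {(a, A \<inter> B) | a A B. (a, A) \<in> R \<and> (a, B) \<in> S}"

definition up_closure :: "('a \<times> 'b set) set \<Rightarrow> ('a \<times> 'b set) set" where
  "up_closure R = {(a, A). \<exists>B. (a, B) \<in> R \<and> B \<subseteq> A}"

definition down_closure :: "('a \<times> 'b set) set \<Rightarrow> ('a \<times> 'b set) set" where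
  "down_closure R = {(a, A). \<exists>B. (a, B) \<in> R \<and> A \<subseteq> B}"

definition up_le :: "('a \<times> 'b set) set \<Rightarrow> ('a \<times> 'b set) set \<Rightarrow> bool" where
  "up_le R S \<longleftrightarrow> S \<subseteq> up_closure R"

definition down_le :: "('a \<times> 'b set) set \<Rightarrow> ('a \<times> 'b set) set \<Rightarrow> bool" where
  "down_le R S \<longleftrightarrow> R \<subseteq> down_closure S"

definition updown_le :: "('a \<times> 'b set) set \<Rightarrow> ('a \<times> 'b set) set \<Rightarrow> bool" where
  "updown_le R S \<longleftrightarrow> down_le R S \<and> up_le R S"

definition down_eq :: "('a \<times> 'b set) set \<Rightarrow> ('a \<times> 'b set) set \<Rightarrow> bool" where
  "down_eq R S \<longleftrightarrow> down_closure R = down_closure S"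

definition up_eq :: "('a \<times> 'b set) set \<Rightarrow> ('a \<times> 'b set) set \<Rightarrow> bool" where
  "up_eq R S \<longleftrightarrow> up_closure R = up_closure S"

definition is_glb :: "('c \<Rightarrow> 'c \<Rightarrow> bool) \<Rightarrow> 'c \<Rightarrow> 'c \<Rightarrow> 'c \<Rightarrow> bool" where
  "is_glb le L R S \<longleftrightarrow> le L R \<and> le L S \<and> (\<forall>T. le T R \<and> le T S \<longrightarrow> le T L)"

definition is_lub :: "('c \<Rightarrow> 'c \<Rightarrow> bool) \<Rightarrow> 'c \<Rightarrow> 'c \<Rightarrow> 'c \<Rightarrow> bool" where
  "is_lub le U R S \<longleftrightarrow> le R U \<and> le S U \<and> (\<forall>T. le R T \<and> le S T \<longrightarrow> le U T)"

end

theory Submission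
  imports Defs
begin

text \<open>Both closures are closure operators, so \<open>\<sqsubseteq>\<^sub>\<down>\<close> and \<open>\<sqsubseteq>\<^sub>\<up>\<close> are inclusion
  of down-closures and reverse inclusion of up-closures. Hence both are preorders whose
  induced equivalences are \<open>=\<^sub>\<down>\<close> and \<open>=\<^sub>\<up>\<close>, and greatest lower / least upper bounds
  are unique up to them. The bound properties themselves are pointwise: a set below
  \<open>A\<close> and below \<open>B\<close> lies below \<open>A \<inter> B\<close>, one above both lies above \<open>A \<union> B\<close>.\<close>

lemma subset_down_closure: "R \<subseteq> down_closure R"
  unfolding down_closure_def by blast

lemma subset_up_closure: "R \<subseteq> up_closure R"
  unfolding up_closure_def by blast

lemma down_closure_mono: "R \<subseteq> S \<Longrightarrow> down_closure R \<subseteq> down_closure S"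
  unfolding down_closure_def by blast

lemma up_closure_mono: "R \<subseteq> S \<Longrightarrow> up_closure R \<subseteq> up_closure S"
  unfolding up_closure_def by blast

lemma down_closure_idem: "down_closure (down_closure R) = down_closure R"
  unfolding down_closure_def by blast

lemma up_closure_idem: "up_closure (up_closure R) = up_closure R"
  unfolding up_closure_def by blast

lemma down_le_iff_down_closure_subset:
  "down_le R S \<longleftrightarrow> down_closure R \<subseteq> down_closure S"
proof
  assume "down_le R S"
  then have "down_closure R \<subseteq> down_closure (down_closure S)"
    unfolding down_le_def by (rule down_closure_mono)
  then show "down_closure R \<subseteq> down_closure S"
    by (simp only: down_closure_idem)
next
  assume "down_closure R \<subseteq> down_closure S"
  then show "down_le R S"
    unfolding down_le_def using subset_down_closure by blast
qed

lemma up_le_iff_up_closure_subset: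
  "up_le R S \<longleftrightarrow> up_closure S \<subseteq> up_closure R"
proof
  assume "up_le R S"
  then have "up_closure S \<subseteq> up_closure (up_closure R)"
    unfolding up_le_def by (rule up_closure_mono)
  then show "up_closure S \<subseteq> up_closure R"
    by (simp only: up_closure_idem)
next
  assume "up_closure S \<subseteq> up_closure R"
  then show "up_le R S"
    unfolding up_le_def using subset_up_closure by blast
qed

lemma down_eq_iff_down_le: "down_eq R S \<longleftrightarrow> down_le R S \<and> down_le S R"
  unfolding down_eq_def down_le_iff_down_closure_subset by blast

lemma up_eq_iff_up_le: "up_eq R S \<longleftrightarrow> up_le R S \<and> up_le S R"
  unfolding up_eq_def up_le_iff_up_closure_subset by blast

lemma is_glb_unique: "is_glb le L R S \<Longrightarrow> is_glb le L' R S \<Longrightarrow> le L L' \<and> le L' L"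
  unfolding is_glb_def by blast

lemma is_lub_unique: "is_lub le U R S \<Longrightarrow> is_lub le U' R S \<Longrightarrow> le U U' \<and> le U' U"
  unfolding is_lub_def by blast

lemma subset_imp_down_le: "R \<subseteq> S \<Longrightarrow> down_le R S"
  unfolding down_le_def using subset_down_closure by blast

lemma subset_imp_up_le: "R \<subseteq> S \<Longrightarrow> up_le S R"
  unfolding up_le_def using subset_up_closure by blast

lemma subset_mcup_self: "R \<subseteq> mcup R R"
  unfolding mcup_def by fastforce

lemma subset_mcap_self: "R \<subseteq> mcap R R"
  unfolding mcap_def by fastforce

lemma mcap_down_le_left: "down_le (mcap R S) R"
  unfolding down_le_def down_closure_def mcap_def by blast

lemma mcap_down_le_right: "down_le (mcap R S) S"
  unfolding down_le_def down_closure_def mcap_def by blast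

lemma up_le_mcup_left: "up_le R (mcup R S)"
  unfolding up_le_def up_closure_def mcup_def by blast

lemma up_le_mcup_right: "up_le S (mcup R S)"
  unfolding up_le_def up_closure_def mcup_def by blast

lemma mcap_down_le_mcup: "down_le (mcap R S) (mcup R S)"
  unfolding down_le_def down_closure_def mcap_def mcup_def by blast

lemma mcap_up_le_mcup: "up_le (mcap R S) (mcup R S)"
  unfolding up_le_def up_closure_def mcap_def mcup_def by blast

lemma down_le_mcap:
  assumes "down_le T R" and "down_le T S"
  shows "down_le T (mcap R S)"
  unfolding down_le_def
proof
  fix p assume "p \<in> T"
  obtain a C where p: "p = (a, C)" by fastforce
  from assms \<open>p \<in> T\<close> obtain A B where "(a, A) \<in> R" "C \<subseteq> A" "(a, B) \<in> S" "C \<subseteq> B"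
    unfolding down_le_def down_closure_def p by blast
  then have "(a, A \<inter> B) \<in> mcap R S" and "C \<subseteq> A \<inter> B"
    unfolding mcap_def by blast+
  then show "p \<in> down_closure (mcap R S)"
    unfolding down_closure_def p by blast
qed

lemma mcup_up_le:
  assumes "up_le R T" and "up_le S T"
  shows "up_le (mcup R S) T"
  unfolding up_le_def
proof
  fix p assume "p \<in> T"
  obtain a C where p: "p = (a, C)" by fastforce
  from assms \<open>p \<in> T\<close> obtain A B where "(a, A) \<in> R" "A \<subseteq> C" "(a, B) \<in> S" "B \<subseteq> C"
    unfolding up_le_def up_closure_def p by blast
  then have "(a, A \<union> B) \<in> mcup R S" and "A \<union> B \<subseteq> C"
    unfolding mcup_def by blast+
  then show "p \<in> up_closure (mcup R S)"
    unfolding up_closure_def p by blast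
qed

lemma Un_down_le: "down_le R T \<Longrightarrow> down_le S T \<Longrightarrow> down_le (R \<union> S) T"
  unfolding down_le_def by blast

lemma up_le_Un: "up_le T R \<Longrightarrow> up_le T S \<Longrightarrow> up_le T (R \<union> S)"
  unfolding up_le_def by blast

lemma is_glb_down_le_mcap: "is_glb down_le (mcap R S) R S"
  unfolding is_glb_def using mcap_down_le_left mcap_down_le_right down_le_mcap by blast

lemma is_lub_down_le_Un: "is_lub down_le (R \<union> S) R S"
  unfolding is_lub_def using subset_imp_down_le Un_down_le by blast

lemma is_lub_up_le_mcup: "is_lub up_le (mcup R S) R S"
  unfolding is_lub_def using up_le_mcup_left up_le_mcup_right mcup_up_le by blast

lemma is_glb_up_le_Un: "is_glb up_le (R \<union> S) R S"
  unfolding is_glb_def using subset_imp_up_le up_le_Un by blast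

theorem lemma5p7:
  fixes R S T :: "('a \<times> 'b set) set"
  shows
   "(R \<subseteq> S \<longrightarrow> down_le (R \<inter> T) (S \<inter> T) \<and> up_le (S \<inter> T) (R \<inter> T))
    \<and> (down_le (mcap R S) R \<and> down_le R (mcup R R)
       \<and> up_le (mcap R R) R \<and> up_le R (mcup R S)
       \<and> updown_le (mcap R R) R \<and> updown_le R (mcup R R))
    \<and> (down_le (mcap R S) (mcup R S) \<and> up_le (mcap R S) (mcup R S)
       \<and> updown_le (mcap R S) (mcup R S))
    \<and> (is_glb down_le (mcap R S) R S \<and> is_lub down_le (R \<union> S) R S
       \<and> (\<forall>L. is_glb down_le L R S \<longrightarrow> down_eq L (mcap R S))
       \<and> (\<forall>U. is_lub down_le U R S \<longrightarrow> down_eq U (R \<union> S)))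
    \<and> (is_lub up_le (mcup R S) R S \<and> is_glb up_le (R \<union> S) R S
       \<and> (\<forall>U. is_lub up_le U R S \<longrightarrow> up_eq U (mcup R S))
       \<and> (\<forall>L. is_glb up_le L R S \<longrightarrow> up_eq L (R \<union> S)))"
proof -
  have mono: "R \<subseteq> S \<longrightarrow> down_le (R \<inter> T) (S \<inter> T) \<and> up_le (S \<inter> T) (R \<inter> T)"
    by (blast intro: subset_imp_down_le subset_imp_up_le)
  have self: "down_le R (mcup R R)" "up_le (mcap R R) R"
    by (simp_all add: subset_imp_down_le subset_imp_up_le subset_mcup_self subset_mcap_self)
  have updown: "updown_le (mcap R R) R" "updown_le R (mcup R R)"
    "updown_le (mcap R S) (mcup R S)"
    unfolding updown_le_def
    using self mcap_down_le_left up_le_mcup_left mcap_down_le_mcup mcap_up_le_mcup by blast+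
  have down_unique: "\<forall>L. is_glb down_le L R S \<longrightarrow> down_eq L (mcap R S)"
    "\<forall>U. is_lub down_le U R S \<longrightarrow> down_eq U (R \<union> S)"
    unfolding down_eq_iff_down_le
    using is_glb_unique[OF _ is_glb_down_le_mcap] is_lub_unique[OF _ is_lub_down_le_Un]
    by blast+
  have up_unique: "\<forall>U. is_lub up_le U R S \<longrightarrow> up_eq U (mcup R S)"
    "\<forall>L. is_glb up_le L R S \<longrightarrow> up_eq L (R \<union> S)"
    unfolding up_eq_iff_up_le
    using is_lub_unique[OF _ is_lub_up_le_mcup] is_glb_unique[OF _ is_glb_up_le_Un]
    by blast+
  show ?thesis
    by (intro conjI mono self updown down_unique up_unique mcap_down_le_left up_le_mcup_left
        mcap_down_le_mcup mcap_up_le_mcup is_glb_down_le_mcap is_lub_down_le_Un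
        is_lub_up_le_mcup is_glb_up_le_Un)
qed

end
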